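(* Let $\mathcal{X}$ be a totally ordered set equipped with a $\sigma$-algebra $\mathcal{F}$, let $n\ge 1$, and let $\mathcal{S}_{n,\bm{\nu}}$ be the set of labelings $\sigma:\{1,\dots,n\}\to\{1,\dots,K\}$ with $|\sigma^{-1}(k)|=n\nu_k$ for each $k$, for a fixed vector of group proportions $\bm{\nu}=(\nu_1,\dots,\nu_K)$. For $\theta\in\{0,1\}$ and $k\in\{1,\dots,K\}$ let $P_{\theta,k}$ be probability measures on $(\mathcal{X},\mathcal{F})$ with densities $p_{\theta,k}$ with respect to a common $\sigma$-finite measure (probability mass functions in the discrete case), and for $\sigma\in\mathcal{S}_{n,\bm{\nu}}$ let $\mathbb{P}_{\theta;\sigma}=\bigotimes_{i=1}^n P_{\theta,\sigma(i)}$ on $(\mathcal{X}^n,\mathcal{F}^{\otimes n})$, with density $\mathbb{P}_{\theta;\sigma}(x^n)=\prod_{i=1}^n p_{\theta,\sigma(i)}(x_i)$. Consider the composite (anonymous) hypothesis testing problem $\mathcal{H}_\theta: X^n\sim \mathbb{P}_{\theta;\sigma}$ for some unknown $\sigma\in\mathcal{S}_{n,\bm{\nu}}$, $\theta\in\{0,1\}$. For a test $\phi:\mathcal{X}^n\to[0,1]$ define $\mathsf{P_F}(\phi)=\max_{\sigma\in\mathcal{S}_{n,\bm{\nu}}}\mathbb{E}_{\mathbb{P}_{0;\sigma}}[\phi(X^n)]$ and $\mathsf{P_M}(\phi)=\max_{\sigma\in\mathcal{S}_{n,\bm{\nu}}}\mathbb{E}_{\mathbb{P}_{1;\sigma}}[1-\phi(X^n)]$.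 Define the mixture likelihood ratio $\ell(x^n)=\frac{\sum_{\sigma\in\mathcal{S}_{n,\bm{\nu}}}\mathbb{P}_{1;\sigma}(x^n)}{\sum_{\sigma\in\mathcal{S}_{n,\bm{\nu}}}\mathbb{P}_{0;\sigma}(x^n)}$ and, for a threshold $\tau\ge 0$ and $\gamma\in[0,1]$, the mixture likelihood ratio test $\phi^*(x^n)=1$ if $\ell(x^n)>\tau$, $\phi^*(x^n)=\gamma$ if $\ell(x^n)=\tau$, $\phi^*(x^n)=0$ if $\ell(x^n)<\tau$. Then among all symmetric tests, $\phi^*$ is optimal: for every symmetric test $\phi$ with $\mathsf{P_F}(\phi)\le \mathsf{P_F}(\phi^* )$ one has $\mathsf{P_M}(\phi)\ge \mathsf{P_M}(\phi^* )$.
   Context: The ordering map $\Pi:\mathcal{X}^n\to\tilde{\mathcal{X}}^n$, where $\tilde{\mathcal{X}}^n=\{x^n\in\mathcal{X}^n: x_1\ge x_2\ge\dots\ge x_n\}$ with $\sigma$-algebra $\tilde{\mathcal{F}}=\mathcal{F}^{\otimes n}\cap\tilde{\mathcal{X}}^n$, sends $x^n$ to the rearrangement $(x_{i_1},\dots,x_{i_n})$ of its coordinates with $x_{i_1}\ge\dots\ge x_{i_n}$. A test $\phi:\mathcal{X}^n\to[0,1]$ is called symmetric if $\phi=\tilde{\phi}\circ\Pi$ for some measurable $\tilde{\phi}:\tilde{\mathcal{X}}^n\to[0,1]$, i.e. $\phi$ takes the same value on $x^n$ and all its coordinate permutations. Optimality is meant in the Neyman–Pearson sense with the worst-case (over $\sigma$)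 error probabilities defined in the claim. *)

theory Defs
  imports "HOL-Probability.Probability"
begin

definition labelings :: "nat \<Rightarrow> nat \<Rightarrow> (nat \<Rightarrow> real) \<Rightarrow> (nat \<Rightarrow> nat) set" where
  "labelings n K \<nu> = {\<sigma> \<in> {1..n} \<rightarrow>\<^sub>E {1..K}.
      \<forall>k\<in>{1..K}. real (card {i\<in>{1..n}. \<sigma> i = k}) = real n * \<nu> k}"

abbreviation Xn :: "'a measure \<Rightarrow> nat \<Rightarrow> (nat \<Rightarrow> 'a) measure" where
  "Xn \<mu> n \<equiv> PiM {1..n} (\<lambda>_. \<mu>)"

definition Pk :: "'a measure \<Rightarrow> (nat \<Rightarrow> nat \<Rightarrow> 'a \<Rightarrow> real) \<Rightarrow> nat \<Rightarrow> nat \<Rightarrow> 'a measure" where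
  "Pk \<mu> p \<theta> k = density \<mu> (\<lambda>x. ennreal (p \<theta> k x))"

definition Pprod :: "'a measure \<Rightarrow> (nat \<Rightarrow> nat \<Rightarrow> 'a \<Rightarrow> real) \<Rightarrow> nat \<Rightarrow> nat \<Rightarrow> (nat \<Rightarrow> nat) \<Rightarrow> (nat \<Rightarrow> 'a) measure" where
  "Pprod \<mu> p n \<theta> \<sigma> = PiM {1..n} (\<lambda>i. Pk \<mu> p \<theta> (\<sigma> i))"

definition dens :: "(nat \<Rightarrow> nat \<Rightarrow> 'a \<Rightarrow> real) \<Rightarrow> nat \<Rightarrow> nat \<Rightarrow> (nat \<Rightarrow> nat) \<Rightarrow> (nat \<Rightarrow> 'a) \<Rightarrow> real" where
  "dens p n \<theta> \<sigma> x = (\<Prod>i\<in>{1..n}. p \<theta> (\<sigma> i) (x i))"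

definition PF :: "'a measure \<Rightarrow> (nat \<Rightarrow> nat \<Rightarrow> 'a \<Rightarrow> real) \<Rightarrow> nat \<Rightarrow> nat \<Rightarrow> (nat \<Rightarrow> real)
    \<Rightarrow> ((nat \<Rightarrow> 'a) \<Rightarrow> real) \<Rightarrow> real" where
  "PF \<mu> p n K \<nu> \<phi> = Max ((\<lambda>\<sigma>. integral\<^sup>L (Pprod \<mu> p n 0 \<sigma>) \<phi>) ` labelings n K \<nu>)"

definition PM :: "'a measure \<Rightarrow> (nat \<Rightarrow> nat \<Rightarrow> 'a \<Rightarrow> real) \<Rightarrow> nat \<Rightarrow> nat \<Rightarrow> (nat \<Rightarrow> real)
    \<Rightarrow> ((nat \<Rightarrow> 'a) \<Rightarrow> real) \<Rightarrow> real" where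
  "PM \<mu> p n K \<nu> \<phi> = Max ((\<lambda>\<sigma>. integral\<^sup>L (Pprod \<mu> p n 1 \<sigma>) (\<lambda>x. 1 - \<phi> x)) ` labelings n K \<nu>)"

text \<open>Mixture likelihood ratio, valued in [0,\<infinity>]: a/0 = \<infinity> for a > 0 (and 0/0 = 0).\<close>
definition mlr :: "(nat \<Rightarrow> nat \<Rightarrow> 'a \<Rightarrow> real) \<Rightarrow> nat \<Rightarrow> nat \<Rightarrow> (nat \<Rightarrow> real) \<Rightarrow> (nat \<Rightarrow> 'a) \<Rightarrow> ennreal" where
  "mlr p n K \<nu> x = ennreal (\<Sum>\<sigma>\<in>labelings n K \<nu>. dens p n 1 \<sigma> x)
                   / ennreal (\<Sum>\<sigma>\<in>labelings n K \<nu>. dens p n 0 \<sigma> x)"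

definition mlr_test :: "(nat \<Rightarrow> nat \<Rightarrow> 'a \<Rightarrow> real) \<Rightarrow> nat \<Rightarrow> nat \<Rightarrow> (nat \<Rightarrow> real) \<Rightarrow> real \<Rightarrow> real
    \<Rightarrow> (nat \<Rightarrow> 'a) \<Rightarrow> real" where
  "mlr_test p n K \<nu> \<tau> \<gamma> x =
     (if mlr p n K \<nu> x > ennreal \<tau> then 1
      else if mlr p n K \<nu> x = ennreal \<tau> then \<gamma> else 0)"

definition is_test :: "'a measure \<Rightarrow> nat \<Rightarrow> ((nat \<Rightarrow> 'a) \<Rightarrow> real) \<Rightarrow> bool" where
  "is_test \<mu> n \<phi> \<longleftrightarrow> \<phi> \<in> borel_measurable (Xn \<mu> n) \<and> (\<forall>x\<in>space (Xn \<mu> n). 0 \<le> \<phi> x \<and> \<phi> x \<le> 1)"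

definition ordmap :: "nat \<Rightarrow> (nat \<Rightarrow> 'a::linorder) \<Rightarrow> (nat \<Rightarrow> 'a)" where
  "ordmap n x = (\<lambda>i\<in>{1..n}. rev (sort (map x [1..<Suc n])) ! (i - 1))"

definition ordered_space :: "'a::linorder measure \<Rightarrow> nat \<Rightarrow> (nat \<Rightarrow> 'a) set" where
  "ordered_space \<mu> n = {x \<in> space (Xn \<mu> n). \<forall>i\<in>{1..n}. \<forall>j\<in>{1..n}. i \<le> j \<longrightarrow> x j \<le> x i}"

definition symmetric_test :: "'a::linorder measure \<Rightarrow> nat \<Rightarrow> ((nat \<Rightarrow> 'a) \<Rightarrow> real) \<Rightarrow> bool" where
  "symmetric_test \<mu> n \<phi> \<longleftrightarrow> is_test \<mu> n \<phi> \<and>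
     (\<exists>\<phi>t. \<phi>t \<in> borel_measurable (restrict_space (Xn \<mu> n) (ordered_space \<mu> n))
        \<and> (\<forall>y\<in>ordered_space \<mu> n. 0 \<le> \<phi>t y \<and> \<phi>t y \<le> 1)
        \<and> (\<forall>x\<in>space (Xn \<mu> n). \<phi> x = \<phi>t (ordmap n x)))"

end

theory Submission
  imports Defs
begin

text \<open>
  A symmetric test and the mixture likelihood ratio test are both invariant under permutations
  of the coordinates, and any two labelings with the prescribed group sizes differ by such a
  permutation. Hence the expectation of either test under P(\<theta>;\<sigma>) does not depend on \<sigma>:
  the maxima defining PF and PM are attained at every labeling, and each expectation is 1/|S|
  times the integral of the test against the mixture density f(\<theta>) = \<Sum>\<sigma>. dens(\<theta>;\<sigma>).
  The claim thus becomes the classical Neyman-Pearson lemma for f(0) and f(1): pointwise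
  (\<phi>* - \<phi>) (f(1) - \<tau> f(0)) \<ge> 0, and integrating this inequality gives the result.
\<close>

lemma PiM_density:
  fixes f :: "'i \<Rightarrow> 'a \<Rightarrow> ennreal"
  assumes I: "finite I"
    and M: "\<And>i. i \<in> I \<Longrightarrow> sigma_finite_measure (M i)"
    and f: "\<And>i. i \<in> I \<Longrightarrow> f i \<in> borel_measurable (M i)"
    and D: "\<And>i. i \<in> I \<Longrightarrow> sigma_finite_measure (density (M i) (f i))"
  shows "PiM I (\<lambda>i. density (M i) (f i)) = density (PiM I M) (\<lambda>x. \<Prod>i\<in>I. f i (x i))"
proof -
  have empty: "sigma_finite_measure (count_space {})"
    by (simp add: finite_measure_count_space finite_measure.axioms(1))
  define M' where "M' i = (if i \<in> I then M i else count_space {})" for i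
  define D' where "D' i = (if i \<in> I then density (M i) (f i) else count_space {})" for i
  interpret M': product_sigma_finite M'
    unfolding product_sigma_finite_def M'_def using M empty by auto
  interpret D': product_sigma_finite D'
    unfolding product_sigma_finite_def D'_def using D empty by auto
  have [simp]: "PiM I M' = PiM I M" "PiM I D' = PiM I (\<lambda>i. density (M i) (f i))"
    by (auto intro!: PiM_cong simp: M'_def D'_def)
  have "density (PiM I M') (\<lambda>x. \<Prod>i\<in>I. f i (x i)) = PiM I D'"
  proof (rule D'.PiM_eqI[OF I])
    show "sets (density (PiM I M') (\<lambda>x. \<Prod>i\<in>I. f i (x i))) = sets (PiM I D')"
      by (auto intro!: sets_PiM_cong simp: M'_def D'_def)
    fix A assume "\<And>i. i \<in> I \<Longrightarrow> A i \<in> sets (D' i)"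
    then have A: "\<And>i. i \<in> I \<Longrightarrow> A i \<in> sets (M' i)" by (auto simp: M'_def D'_def)
    have "emeasure (density (PiM I M') (\<lambda>x. \<Prod>i\<in>I. f i (x i))) (Pi\<^sub>E I A)
        = (\<integral>\<^sup>+ x. (\<Prod>i\<in>I. f i (x i)) * indicator (Pi\<^sub>E I A) x \<partial>PiM I M')"
      using f A by (intro emeasure_density sets_PiM_I_finite I)
        (auto simp: M'_def intro!: borel_measurable_prod_ennreal
          intro: measurable_compose[OF measurable_component_singleton])
    also have "\<dots> = (\<integral>\<^sup>+ x. (\<Prod>i\<in>I. f i (x i) * indicator (A i) (x i)) \<partial>PiM I M')"
      using I by (intro nn_integral_cong) (auto simp: indicator_def prod.distrib space_PiM PiE_iff)
    also have "\<dots> = (\<Prod>i\<in>I. \<integral>\<^sup>+ y. f i y * indicator (A i) y \<partial>M' i)"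
      using f A by (intro M'.product_nn_integral_prod I) (auto simp: M'_def)
    also have "\<dots> = (\<Prod>i\<in>I. emeasure (D' i) (A i))"
      using f A by (intro prod.cong refl) (auto simp: M'_def D'_def emeasure_density)
    finally show "emeasure (density (PiM I M') (\<lambda>x. \<Prod>i\<in>I. f i (x i))) (Pi\<^sub>E I A)
        = (\<Prod>i\<in>I. emeasure (D' i) (A i))" .
  qed
  then show ?thesis by simp
qed

text \<open>The test is written with the ennreal quotient used by mlr, so that b = 0 < a counts as
  likelihood ratio \<infinity>.\<close>

lemma neyman_pearson_pointwise:
  fixes a b \<tau> \<gamma> t :: real
  assumes "0 \<le> a" "0 \<le> b" "0 \<le> \<tau>" "0 \<le> t" "t \<le> 1"
  shows "0 \<le> ((if ennreal \<tau> < ennreal a / ennreal b then 1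
          else if ennreal a / ennreal b = ennreal \<tau> then \<gamma> else 0) - t) * (a - \<tau> * b)"
proof (cases "b = 0")
  case True
  then show ?thesis
    using assms by (cases "a = 0") (simp_all add: ennreal_divide_top)
next
  case False
  then have ratio: "ennreal a / ennreal b = ennreal (a / b)"
    using assms by (simp add: divide_ennreal)
  from False assms have "0 < b" by simp
  consider "\<tau> < a / b" | "a / b = \<tau>" | "a / b < \<tau>" by linarith
  then show ?thesis
  proof cases
    case 1
    then have "\<tau> * b < a" using \<open>0 < b\<close> by (simp add: pos_less_divide_eq)
    with 1 show ?thesis using assms by (simp add: ratio ennreal_less_iff)
  next
    case 2
    then have "a = \<tau> * b" using \<open>0 < b\<close> by (simp add: field_simps)
    then show ?thesis by simp
  next
    case 3
    then have "a < \<tau> * b" using \<open>0 < b\<close> by (simp add: pos_divide_less_eq)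
    with 3 show ?thesis
      using assms by (simp add: ratio ennreal_less_iff mult_nonneg_nonpos ennreal_inj)
  qed
qed

lemma neyman_pearson_integral:
  fixes f\<^sub>0 f\<^sub>1 \<phi> \<psi> :: "'b \<Rightarrow> real"
  assumes "integrable M (\<lambda>x. f\<^sub>0 x * \<phi> x)" "integrable M (\<lambda>x. f\<^sub>0 x * \<psi> x)"
    and "integrable M (\<lambda>x. f\<^sub>1 x * \<phi> x)" "integrable M (\<lambda>x. f\<^sub>1 x * \<psi> x)"
    and pointwise: "\<And>x. x \<in> space M \<Longrightarrow> 0 \<le> (\<psi> x - \<phi> x) * (f\<^sub>1 x - \<tau> * f\<^sub>0 x)"
    and "0 \<le> \<tau>"
    and size: "(\<integral>x. f\<^sub>0 x * \<phi> x \<partial>M) \<le> (\<integral>x. f\<^sub>0 x * \<psi> x \<partial>M)"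
  shows "(\<integral>x. f\<^sub>1 x * \<phi> x \<partial>M) \<le> (\<integral>x. f\<^sub>1 x * \<psi> x \<partial>M)"
proof -
  have "0 \<le> (\<integral>x. (\<psi> x - \<phi> x) * (f\<^sub>1 x - \<tau> * f\<^sub>0 x) \<partial>M)"
    using pointwise by (intro integral_nonneg_AE AE_I2) blast
  also have "\<dots> = (\<integral>x. (f\<^sub>1 x * \<psi> x - f\<^sub>1 x * \<phi> x) - \<tau> * (f\<^sub>0 x * \<psi> x - f\<^sub>0 x * \<phi> x) \<partial>M)"
    by (simp add: algebra_simps)
  also have "\<dots> = ((\<integral>x. f\<^sub>1 x * \<psi> x \<partial>M) - (\<integral>x. f\<^sub>1 x * \<phi> x \<partial>M))
      - \<tau> * ((\<integral>x. f\<^sub>0 x * \<psi> x \<partial>M) - (\<integral>x. f\<^sub>0 x * \<phi> x \<partial>M))"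
    using assms(1-4) by simp
  moreover have "0 \<le> \<tau> * ((\<integral>x. f\<^sub>0 x * \<psi> x \<partial>M) - (\<integral>x. f\<^sub>0 x * \<phi> x \<partial>M))"
    using size \<open>0 \<le> \<tau>\<close> by simp
  ultimately show ?thesis by linarith
qed

definition coord_perm :: "nat \<Rightarrow> (nat \<Rightarrow> nat) \<Rightarrow> (nat \<Rightarrow> 'b) \<Rightarrow> nat \<Rightarrow> 'b" where
  "coord_perm n \<pi> x = (\<lambda>i\<in>{1..n}. x (\<pi> i))"

definition perm_invariant :: "nat \<Rightarrow> (nat \<Rightarrow> 'a) set \<Rightarrow> ((nat \<Rightarrow> 'a) \<Rightarrow> 'b) \<Rightarrow> bool" where
  "perm_invariant n A g \<longleftrightarrow>
     (\<forall>\<pi>. bij_betw \<pi> {1..n} {1..n} \<longrightarrow> (\<forall>x\<in>A. g (coord_perm n \<pi> x) = g x))"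

definition mixture_dens :: "(nat \<Rightarrow> nat \<Rightarrow> 'a \<Rightarrow> real) \<Rightarrow> nat \<Rightarrow> nat \<Rightarrow> (nat \<Rightarrow> real) \<Rightarrow> nat
    \<Rightarrow> (nat \<Rightarrow> 'a) \<Rightarrow> real" where
  "mixture_dens p n K \<nu> \<theta> x = (\<Sum>\<sigma>\<in>labelings n K \<nu>. dens p n \<theta> \<sigma> x)"

lemma mlr_eq_mixture_dens:
  "mlr p n K \<nu> x = ennreal (mixture_dens p n K \<nu> 1 x) / ennreal (mixture_dens p n K \<nu> 0 x)"
  by (simp add: mlr_def mixture_dens_def)

lemma coord_perm_in_PiE:
  assumes "\<pi> \<in> {1..n} \<rightarrow> {1..n}" "x \<in> {1..n} \<rightarrow>\<^sub>E A"
  shows "coord_perm n \<pi> x \<in> {1..n} \<rightarrow>\<^sub>E A"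
  using assms by (auto simp: coord_perm_def)

lemma finite_labelings: "finite (labelings n K \<nu>)"
  by (rule finite_subset[of _ "{1..n} \<rightarrow>\<^sub>E {1..K}"]) (auto simp: labelings_def finite_PiE)

lemma card_fiber_coord_perm:
  assumes \<pi>: "bij_betw \<pi> {1..n} {1..n}"
  shows "card {i\<in>{1..n}. coord_perm n \<pi> \<sigma> i = k} = card {i\<in>{1..n}. \<sigma> i = k}"
proof -
  have image: "\<pi> ` {i\<in>{1..n}. \<sigma> (\<pi> i) = k} = {i\<in>{1..n}. \<sigma> i = k}"
  proof
    show "{i\<in>{1..n}. \<sigma> i = k} \<subseteq> \<pi> ` {i\<in>{1..n}. \<sigma> (\<pi> i) = k}"
    proof
      fix j assume j: "j \<in> {i\<in>{1..n}. \<sigma> i = k}"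
      then obtain i where "i \<in> {1..n}" "j = \<pi> i"
        using \<pi> by (metis (no_types, lifting) bij_betw_def imageE mem_Collect_eq)
      with j show "j \<in> \<pi> ` {i\<in>{1..n}. \<sigma> (\<pi> i) = k}" by blast
    qed
  qed (use \<pi> in \<open>auto simp: bij_betw_def\<close>)
  have "inj_on \<pi> {i\<in>{1..n}. \<sigma> (\<pi> i) = k}"
    using \<pi> by (auto simp: bij_betw_def intro: inj_on_subset)
  then have "card (\<pi> ` {i\<in>{1..n}. \<sigma> (\<pi> i) = k}) = card {i\<in>{1..n}. \<sigma> (\<pi> i) = k}"
    by (rule card_image)
  then have "card {i\<in>{1..n}. \<sigma> i = k} = card {i\<in>{1..n}. \<sigma> (\<pi> i) = k}"
    unfolding image .
  moreover have "{i\<in>{1..n}. coord_perm n \<pi> \<sigma> i = k} = {i\<in>{1..n}. \<sigma> (\<pi> i) = k}"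
    by (auto simp: coord_perm_def)
  ultimately show ?thesis by simp
qed

lemma coord_perm_in_labelings:
  assumes "\<sigma> \<in> labelings n K \<nu>" "bij_betw \<pi> {1..n} {1..n}"
  shows "coord_perm n \<pi> \<sigma> \<in> labelings n K \<nu>"
  using assms(1) coord_perm_in_PiE[OF bij_betw_imp_funcset[OF assms(2)]]
  unfolding labelings_def mem_Collect_eq card_fiber_coord_perm[OF assms(2)] by blast

lemma labelings_coord_perm_transitive:
  assumes \<sigma>: "\<sigma> \<in> labelings n K \<nu>" and \<sigma>': "\<sigma>' \<in> labelings n K \<nu>"
  obtains \<pi> where "bij_betw \<pi> {1..n} {1..n}" "\<sigma>' = coord_perm n \<pi> \<sigma>"
proof -
  define A where "A k = {i\<in>{1..n}. \<sigma>' i = k}" for k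
  define B where "B k = {i\<in>{1..n}. \<sigma> i = k}" for k
  have "real (card (A k)) = real (card (B k))" if "k \<in> {1..K}" for k
    using \<sigma> \<sigma>' that unfolding labelings_def A_def B_def by auto
  then have "card (A k) = card (B k)" if "k \<in> {1..K}" for k
    using that by simp
  then have "\<exists>h. bij_betw h (A k) (B k)" if "k \<in> {1..K}" for k
    using that by (intro finite_same_card_bij) (auto simp: A_def B_def)
  then obtain h where h: "\<And>k. k \<in> {1..K} \<Longrightarrow> bij_betw (h k) (A k) (B k)" by metis
  define \<pi> where "\<pi> i = h (\<sigma>' i) i" for i
  have \<sigma>'_range: "\<sigma>' i \<in> {1..K}" if "i \<in> {1..n}" for i
    using \<sigma>' that by (auto simp: labelings_def)
  have \<pi>_fiber: "\<pi> i \<in> B (\<sigma>' i)" if "i \<in> {1..n}" for i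
    using bij_betw_apply[OF h[OF \<sigma>'_range[OF that]]] that by (simp add: \<pi>_def A_def)
  have "inj_on \<pi> {1..n}"
  proof (rule inj_onI)
    fix i j assume ij: "i \<in> {1..n}" "j \<in> {1..n}" "\<pi> i = \<pi> j"
    then have "\<sigma>' i = \<sigma>' j" using \<pi>_fiber by (metis (mono_tags, lifting) B_def mem_Collect_eq)
    with ij h[OF \<sigma>'_range] show "i = j"
      by (auto simp: \<pi>_def A_def bij_betw_def dest: inj_onD)
  qed
  moreover have "\<pi> ` {1..n} \<subseteq> {1..n}" using \<pi>_fiber by (auto simp: B_def)
  ultimately have "bij_betw \<pi> {1..n} {1..n}"
    by (simp add: bij_betw_def endo_inj_surj)
  moreover have "\<sigma>' = coord_perm n \<pi> \<sigma>"
    using \<sigma>' \<pi>_fiber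
    by (intro extensionalityI[of _ "{1..n}"])
      (auto simp: labelings_def coord_perm_def B_def PiE_def)
  ultimately show thesis by (rule that)
qed

lemma bij_betw_coord_perm_labelings:
  assumes \<pi>: "bij_betw \<pi> {1..n} {1..n}"
  shows "bij_betw (coord_perm n \<pi>) (labelings n K \<nu>) (labelings n K \<nu>)"
proof -
  have "inj_on (coord_perm n \<pi>) (labelings n K \<nu>)"
  proof (rule inj_onI)
    fix \<sigma> \<sigma>' assume "\<sigma> \<in> labelings n K \<nu>" "\<sigma>' \<in> labelings n K \<nu>"
      and eq: "coord_perm n \<pi> \<sigma> = coord_perm n \<pi> \<sigma>'"
    moreover have "\<sigma> j = \<sigma>' j" if "j \<in> {1..n}" for j
    proof -
      obtain i where "i \<in> {1..n}" "j = \<pi> i" using \<pi> \<open>j \<in> {1..n}\<close> by (metis bij_betw_def imageE)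
      then show ?thesis using fun_cong[OF eq, of i] by (simp add: coord_perm_def)
    qed
    ultimately show "\<sigma> = \<sigma>'"
      by (intro extensionalityI[of _ "{1..n}"]) (auto simp: labelings_def PiE_def)
  qed
  moreover have "coord_perm n \<pi> ` labelings n K \<nu> \<subseteq> labelings n K \<nu>"
    using coord_perm_in_labelings[OF _ \<pi>] by blast
  ultimately show ?thesis by (simp add: bij_betw_def endo_inj_surj finite_labelings)
qed

lemma dens_coord_perm:
  assumes "bij_betw \<pi> {1..n} {1..n}"
  shows "dens p n \<theta> (coord_perm n \<pi> \<sigma>) (coord_perm n \<pi> x) = dens p n \<theta> \<sigma> x"
  unfolding dens_def coord_perm_def
  using prod.reindex_bij_betw[OF assms, of "\<lambda>j. p \<theta> (\<sigma> j) (x j)"] by simp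

lemma mixture_dens_coord_perm:
  assumes \<pi>: "bij_betw \<pi> {1..n} {1..n}"
  shows "mixture_dens p n K \<nu> \<theta> (coord_perm n \<pi> x) = mixture_dens p n K \<nu> \<theta> x"
proof -
  have "mixture_dens p n K \<nu> \<theta> (coord_perm n \<pi> x)
      = (\<Sum>\<sigma>\<in>labelings n K \<nu>. dens p n \<theta> (coord_perm n \<pi> \<sigma>) (coord_perm n \<pi> x))"
    unfolding mixture_dens_def
    by (rule sum.reindex_bij_betw[OF bij_betw_coord_perm_labelings[OF \<pi>], symmetric])
  then show ?thesis by (simp add: dens_coord_perm[OF \<pi>] mixture_dens_def)
qed

lemma perm_invariant_mlr_test: "perm_invariant n A (mlr_test p n K \<nu> \<tau> \<gamma>)"
  by (simp add: perm_invariant_def mlr_test_def mlr_eq_mixture_dens mixture_dens_coord_perm)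

lemma ordmap_coord_perm:
  assumes \<pi>: "bij_betw \<pi> {1..n} {1..n}"
  shows "ordmap n (coord_perm n \<pi> x) = ordmap n x"
proof -
  have indices: "set [1..<Suc n] = {1..n}" by auto
  have "mset (map \<pi> [1..<Suc n]) = mset [1..<Suc n]"
    using \<pi> by (intro set_eq_iff_mset_eq_distinct[THEN iffD1])
      (simp_all only: distinct_map set_map indices bij_betw_def distinct_upt)
  moreover have "map (coord_perm n \<pi> x) [1..<Suc n] = map x (map \<pi> [1..<Suc n])"
    by (auto simp: coord_perm_def)
  ultimately have "mset (map (coord_perm n \<pi> x) [1..<Suc n]) = mset (map x [1..<Suc n])"
    by (metis mset_map)
  then have "sort (map (coord_perm n \<pi> x) [1..<Suc n]) = sort (map x [1..<Suc n])"
    by (intro properties_for_sort) simp_all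
  then show ?thesis
    unfolding ordmap_def by (simp only:)
qed

lemma perm_invariant_symmetric_test:
  assumes "symmetric_test \<mu> n \<phi>"
  shows "perm_invariant n (space (Xn \<mu> n)) \<phi>"
proof -
  obtain \<phi>' where \<phi>': "\<And>x. x \<in> space (Xn \<mu> n) \<Longrightarrow> \<phi> x = \<phi>' (ordmap n x)"
    using assms unfolding symmetric_test_def by blast
  have "coord_perm n \<pi> x \<in> space (Xn \<mu> n)"
    if "bij_betw \<pi> {1..n} {1..n}" "x \<in> space (Xn \<mu> n)" for \<pi> x
    using that coord_perm_in_PiE[OF bij_betw_imp_funcset] by (simp add: space_PiM)
  then show ?thesis
    by (simp add: perm_invariant_def \<phi>' ordmap_coord_perm)
qed

lemma labelings_range: "\<sigma> \<in> labelings n K \<nu> \<Longrightarrow> i \<in> {1..n} \<Longrightarrow> \<sigma> i \<in> {1..K}"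
  unfolding labelings_def by blast

lemma sets_Pprod: "sets (Pprod \<mu> p n \<theta> \<sigma>) = sets (Xn \<mu> n)"
  unfolding Pprod_def Pk_def by (intro sets_PiM_cong) auto

lemma space_Pprod: "space (Pprod \<mu> p n \<theta> \<sigma>) = space (Xn \<mu> n)"
  using sets_Pprod by (rule sets_eq_imp_space_eq)

locale anonymous_testing =
  fixes \<mu> :: "'a measure" and p :: "nat \<Rightarrow> nat \<Rightarrow> 'a \<Rightarrow> real"
    and n K :: nat and \<nu> :: "nat \<Rightarrow> real"
  assumes sigma_finite: "sigma_finite_measure \<mu>"
    and p_measurable: "\<And>\<theta> k. \<theta> \<in> {0,1} \<Longrightarrow> k \<in> {1..K} \<Longrightarrow> p \<theta> k \<in> borel_measurable \<mu>"
    and p_nonneg: "\<And>\<theta> k x. \<theta> \<in> {0,1} \<Longrightarrow> k \<in> {1..K} \<Longrightarrow> x \<in> space \<mu> \<Longrightarrow> 0 \<le> p \<theta> k x"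
    and prob_space_Pk: "\<And>\<theta> k. \<theta> \<in> {0,1} \<Longrightarrow> k \<in> {1..K} \<Longrightarrow> prob_space (Pk \<mu> p \<theta> k)"
begin

context
  fixes \<theta> :: nat
  assumes \<theta>: "\<theta> \<in> {0,1}"
begin

lemma prob_space_Pprod: "\<sigma> \<in> labelings n K \<nu> \<Longrightarrow> prob_space (Pprod \<mu> p n \<theta> \<sigma>)"
  unfolding Pprod_def using prob_space_Pk[OF \<theta> labelings_range] by (intro prob_space_PiM)

lemma dens_measurable: "\<sigma> \<in> labelings n K \<nu> \<Longrightarrow> dens p n \<theta> \<sigma> \<in> borel_measurable (Xn \<mu> n)"
  unfolding dens_def[abs_def] using p_measurable[OF \<theta> labelings_range]
  by (intro borel_measurable_prod)
    (auto intro: measurable_compose[OF measurable_component_singleton])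

lemma dens_nonneg:
  assumes \<sigma>: "\<sigma> \<in> labelings n K \<nu>" and x: "x \<in> space (Xn \<mu> n)"
  shows "0 \<le> dens p n \<theta> \<sigma> x"
proof -
  have "0 \<le> p \<theta> (\<sigma> i) (x i)" if "i \<in> {1..n}" for i
    using p_nonneg[OF \<theta> labelings_range[OF \<sigma> that]] x that by (simp add: space_PiM PiE_iff)
  then show ?thesis unfolding dens_def by (rule prod_nonneg)
qed

lemma mixture_dens_measurable: "mixture_dens p n K \<nu> \<theta> \<in> borel_measurable (Xn \<mu> n)"
  unfolding mixture_dens_def[abs_def] using dens_measurable by (intro borel_measurable_sum) auto

lemma mixture_dens_nonneg: "x \<in> space (Xn \<mu> n) \<Longrightarrow> 0 \<le> mixture_dens p n K \<nu> \<theta> x"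
  unfolding mixture_dens_def using dens_nonneg by (intro sum_nonneg) auto

lemma Pprod_eq_density:
  assumes \<sigma>: "\<sigma> \<in> labelings n K \<nu>"
  shows "Pprod \<mu> p n \<theta> \<sigma> = density (Xn \<mu> n) (\<lambda>x. ennreal (dens p n \<theta> \<sigma> x))"
proof -
  note p_\<sigma> = p_measurable[OF \<theta> labelings_range[OF \<sigma>]]
  have "Pprod \<mu> p n \<theta> \<sigma> = density (Xn \<mu> n) (\<lambda>x. \<Prod>i\<in>{1..n}. ennreal (p \<theta> (\<sigma> i) (x i)))"
    unfolding Pprod_def Pk_def
    using sigma_finite p_\<sigma>
      prob_space_Pk[OF \<theta> labelings_range[OF \<sigma>], THEN prob_space_imp_sigma_finite]
    by (intro PiM_density) (auto simp: Pk_def)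
  also have "\<dots> = density (Xn \<mu> n) (\<lambda>x. ennreal (dens p n \<theta> \<sigma> x))"
  proof (intro density_cong AE_I2)
    show "(\<lambda>x. \<Prod>i\<in>{1..n}. ennreal (p \<theta> (\<sigma> i) (x i))) \<in> borel_measurable (Xn \<mu> n)"
      using p_\<sigma> by (intro borel_measurable_prod_ennreal)
        (auto intro: measurable_compose[OF measurable_component_singleton])
    show "(\<lambda>x. ennreal (dens p n \<theta> \<sigma> x)) \<in> borel_measurable (Xn \<mu> n)"
      using dens_measurable[OF \<sigma>] by (rule measurable_compose[OF _ measurable_ennreal])
    fix x assume "x \<in> space (Xn \<mu> n)"
    then show "(\<Prod>i\<in>{1..n}. ennreal (p \<theta> (\<sigma> i) (x i))) = ennreal (dens p n \<theta> \<sigma> x)"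
      using p_nonneg[OF \<theta> labelings_range[OF \<sigma>]]
      by (subst prod_ennreal) (auto simp: dens_def space_PiM PiE_iff)
  qed
  finally show ?thesis .
qed

lemma integral_Pprod_coord_perm:
  fixes g :: "(nat \<Rightarrow> 'a) \<Rightarrow> real"
  assumes \<sigma>: "\<sigma> \<in> labelings n K \<nu>" and \<pi>: "bij_betw \<pi> {1..n} {1..n}"
    and g: "g \<in> borel_measurable (Xn \<mu> n)" "perm_invariant n (space (Xn \<mu> n)) g"
  shows "integral\<^sup>L (Pprod \<mu> p n \<theta> (coord_perm n \<pi> \<sigma>)) g = integral\<^sup>L (Pprod \<mu> p n \<theta> \<sigma>) g"
proof -
  let ?P = "Pprod \<mu> p n \<theta> \<sigma>" and ?P\<pi> = "Pprod \<mu> p n \<theta> (coord_perm n \<pi> \<sigma>)"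
  have P\<pi>: "?P\<pi> = PiM {1..n} (\<lambda>i. Pk \<mu> p \<theta> (\<sigma> (\<pi> i)))"
    unfolding Pprod_def by (intro PiM_cong) (auto simp: coord_perm_def)
  have distr: "?P\<pi> = distr ?P ?P\<pi> (coord_perm n \<pi>)"
    unfolding P\<pi> unfolding Pprod_def coord_perm_def[abs_def]
    using \<pi> prob_space_Pk[OF \<theta> labelings_range[OF \<sigma>]]
    by (intro distr_PiM_reindex[symmetric]) (auto simp: bij_betw_def)
  have "coord_perm n \<pi> \<in> measurable ?P ?P\<pi>"
    unfolding Pprod_def coord_perm_def[abs_def] using \<pi>
    by (intro measurable_restrict) (auto simp: bij_betw_def intro!: measurable_component_singleton)
  moreover have "g \<in> borel_measurable ?P\<pi>"
    using g by (simp add: measurable_cong_sets[OF sets_Pprod refl])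
  ultimately have "integral\<^sup>L (distr ?P ?P\<pi> (coord_perm n \<pi>)) g
      = integral\<^sup>L ?P (\<lambda>x. g (coord_perm n \<pi> x))"
    by (rule integral_distr)
  then have "integral\<^sup>L ?P\<pi> g = integral\<^sup>L ?P (\<lambda>x. g (coord_perm n \<pi> x))"
    by (simp flip: distr)
  also have "\<dots> = integral\<^sup>L ?P g"
    using g \<pi> by (intro Bochner_Integration.integral_cong refl)
      (simp add: perm_invariant_def space_Pprod)
  finally show ?thesis .
qed

lemma integral_Pprod_labelings_eq:
  fixes g :: "(nat \<Rightarrow> 'a) \<Rightarrow> real"
  assumes \<sigma>: "\<sigma> \<in> labelings n K \<nu>" and \<sigma>': "\<sigma>' \<in> labelings n K \<nu>"
    and g: "g \<in> borel_measurable (Xn \<mu> n)" "perm_invariant n (space (Xn \<mu> n)) g"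
  shows "integral\<^sup>L (Pprod \<mu> p n \<theta> \<sigma>') g = integral\<^sup>L (Pprod \<mu> p n \<theta> \<sigma>) g"
proof -
  obtain \<pi> where \<pi>: "bij_betw \<pi> {1..n} {1..n}" and \<sigma>'_eq: "\<sigma>' = coord_perm n \<pi> \<sigma>"
    using labelings_coord_perm_transitive[OF \<sigma> \<sigma>'] .
  show ?thesis
    unfolding \<sigma>'_eq by (rule integral_Pprod_coord_perm[OF \<sigma> \<pi> g])
qed

lemma Max_integral_Pprod:
  fixes g :: "(nat \<Rightarrow> 'a) \<Rightarrow> real"
  assumes \<sigma>: "\<sigma> \<in> labelings n K \<nu>"
    and g: "g \<in> borel_measurable (Xn \<mu> n)" "perm_invariant n (space (Xn \<mu> n)) g"
  shows "Max ((\<lambda>\<sigma>'. integral\<^sup>L (Pprod \<mu> p n \<theta> \<sigma>') g) ` labelings n K \<nu>)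
       = integral\<^sup>L (Pprod \<mu> p n \<theta> \<sigma>) g"
proof -
  have "(\<lambda>\<sigma>'. integral\<^sup>L (Pprod \<mu> p n \<theta> \<sigma>') g) ` labelings n K \<nu>
      = (\<lambda>_. integral\<^sup>L (Pprod \<mu> p n \<theta> \<sigma>) g) ` labelings n K \<nu>"
    by (rule image_cong[OF refl integral_Pprod_labelings_eq[OF \<sigma> _ g]])
  also have "\<dots> = {integral\<^sup>L (Pprod \<mu> p n \<theta> \<sigma>) g}"
    using \<sigma> by (rule image_constant)
  finally show ?thesis by simp
qed

lemma integral_dens_mult:
  assumes \<sigma>: "\<sigma> \<in> labelings n K \<nu>" and g: "is_test \<mu> n g"
  shows "integrable (Xn \<mu> n) (\<lambda>x. dens p n \<theta> \<sigma> x * g x)"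
    and "(\<integral>x. dens p n \<theta> \<sigma> x * g x \<partial>Xn \<mu> n) = integral\<^sup>L (Pprod \<mu> p n \<theta> \<sigma>) g"
proof -
  interpret prob_space "Pprod \<mu> p n \<theta> \<sigma>" by (rule prob_space_Pprod[OF \<sigma>])
  have g_measurable: "g \<in> borel_measurable (Xn \<mu> n)" using g by (simp add: is_test_def)
  have dens: "dens p n \<theta> \<sigma> \<in> borel_measurable (Xn \<mu> n)" "AE x in Xn \<mu> n. 0 \<le> dens p n \<theta> \<sigma> x"
    using dens_measurable[OF \<sigma>] dens_nonneg[OF \<sigma>] by auto
  have "integrable (Pprod \<mu> p n \<theta> \<sigma>) g"
    using g by (intro integrable_const_bound[where B=1])
      (auto simp: is_test_def space_Pprod measurable_cong_sets[OF sets_Pprod refl])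
  then show "integrable (Xn \<mu> n) (\<lambda>x. dens p n \<theta> \<sigma> x * g x)"
    unfolding Pprod_eq_density[OF \<sigma>] using integrable_density[OF g_measurable dens] by simp
  show "(\<integral>x. dens p n \<theta> \<sigma> x * g x \<partial>Xn \<mu> n) = integral\<^sup>L (Pprod \<mu> p n \<theta> \<sigma>) g"
    unfolding Pprod_eq_density[OF \<sigma>] using integral_density[OF g_measurable dens] by simp
qed

lemma mixture_dens_mult_eq_sum:
  "(\<lambda>x. mixture_dens p n K \<nu> \<theta> x * g x) = (\<lambda>x. \<Sum>\<sigma>\<in>labelings n K \<nu>. dens p n \<theta> \<sigma> x * g x)"
  by (simp add: mixture_dens_def sum_distrib_right)

lemma integrable_mixture_dens:
  "is_test \<mu> n g \<Longrightarrow> integrable (Xn \<mu> n) (\<lambda>x. mixture_dens p n K \<nu> \<theta> x * g x)"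
  unfolding mixture_dens_mult_eq_sum
  by (intro Bochner_Integration.integrable_sum integral_dens_mult)

lemma integral_mixture_dens:
  assumes \<sigma>: "\<sigma> \<in> labelings n K \<nu>"
    and g: "is_test \<mu> n g" "perm_invariant n (space (Xn \<mu> n)) g"
  shows "(\<integral>x. mixture_dens p n K \<nu> \<theta> x * g x \<partial>Xn \<mu> n)
      = card (labelings n K \<nu>) * integral\<^sup>L (Pprod \<mu> p n \<theta> \<sigma>) g"
proof -
  have "(\<integral>x. mixture_dens p n K \<nu> \<theta> x * g x \<partial>Xn \<mu> n)
      = (\<Sum>\<sigma>'\<in>labelings n K \<nu>. integral\<^sup>L (Pprod \<mu> p n \<theta> \<sigma>') g)"
    unfolding mixture_dens_mult_eq_sum using integral_dens_mult[OF _ g(1)]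
    by (simp add: Bochner_Integration.integral_sum)
  also have "\<dots> = (\<Sum>\<sigma>'\<in>labelings n K \<nu>. integral\<^sup>L (Pprod \<mu> p n \<theta> \<sigma>) g)"
    using g by (intro sum.cong refl integral_Pprod_labelings_eq[OF \<sigma>]) (simp_all add: is_test_def)
  finally show ?thesis by simp
qed

lemma integral_Pprod_le_iff_mixture:
  assumes \<sigma>: "\<sigma> \<in> labelings n K \<nu>"
    and g: "is_test \<mu> n g" "perm_invariant n (space (Xn \<mu> n)) g"
    and h: "is_test \<mu> n h" "perm_invariant n (space (Xn \<mu> n)) h"
  shows "integral\<^sup>L (Pprod \<mu> p n \<theta> \<sigma>) g \<le> integral\<^sup>L (Pprod \<mu> p n \<theta> \<sigma>) h \<longleftrightarrow>
    (\<integral>x. mixture_dens p n K \<nu> \<theta> x * g x \<partial>Xn \<mu> n) \<le> (\<integral>x. mixture_dens p n K \<nu> \<theta> x * h x \<partial>Xn \<mu> n)"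
proof -
  have "0 < real (card (labelings n K \<nu>))" using \<sigma> by (auto simp: card_gt_0_iff finite_labelings)
  then show ?thesis
    using integral_mixture_dens[OF \<sigma> g] integral_mixture_dens[OF \<sigma> h] by simp
qed

end

lemma PF_eq_integral:
  assumes \<sigma>: "\<sigma> \<in> labelings n K \<nu>" and g: "is_test \<mu> n g" "perm_invariant n (space (Xn \<mu> n)) g"
  shows "PF \<mu> p n K \<nu> g = integral\<^sup>L (Pprod \<mu> p n 0 \<sigma>) g"
proof -
  have "g \<in> borel_measurable (Xn \<mu> n)" using g(1) by (simp add: is_test_def)
  from Max_integral_Pprod[OF _ \<sigma> this g(2), of 0] show ?thesis unfolding PF_def by simp
qed

lemma PM_eq_integral:
  assumes \<sigma>: "\<sigma> \<in> labelings n K \<nu>" and g: "is_test \<mu> n g" "perm_invariant n (space (Xn \<mu> n)) g"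
  shows "PM \<mu> p n K \<nu> g = 1 - integral\<^sup>L (Pprod \<mu> p n 1 \<sigma>) g"
proof -
  interpret prob_space "Pprod \<mu> p n 1 \<sigma>" by (rule prob_space_Pprod) (simp_all add: \<sigma>)
  have g_measurable: "g \<in> borel_measurable (Pprod \<mu> p n 1 \<sigma>)"
    using g by (simp add: is_test_def measurable_cong_sets[OF sets_Pprod refl])
  have "PM \<mu> p n K \<nu> g = integral\<^sup>L (Pprod \<mu> p n 1 \<sigma>) (\<lambda>x. 1 - g x)"
    unfolding PM_def
    by (rule Max_integral_Pprod[OF _ \<sigma>]) (use g in \<open>auto simp: is_test_def perm_invariant_def\<close>)
  also have "\<dots> = 1 - integral\<^sup>L (Pprod \<mu> p n 1 \<sigma>) g"
  proof -
    have "integrable (Pprod \<mu> p n 1 \<sigma>) g"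
      using g by (intro integrable_const_bound[where B=1] g_measurable)
        (auto simp: is_test_def space_Pprod)
    then have "integral\<^sup>L (Pprod \<mu> p n 1 \<sigma>) (\<lambda>x. 1 - g x)
        = (\<integral>x. 1 \<partial>Pprod \<mu> p n 1 \<sigma>) - integral\<^sup>L (Pprod \<mu> p n 1 \<sigma>) g"
      by (rule Bochner_Integration.integral_diff[OF integrable_const])
    also have "(\<integral>x. 1 \<partial>Pprod \<mu> p n 1 \<sigma>) = (1::real)"
      using prob_space by simp
    finally show ?thesis .
  qed
  finally show ?thesis .
qed

lemma is_test_mlr_test:
  assumes "0 \<le> \<gamma>" "\<gamma> \<le> 1"
  shows "is_test \<mu> n (mlr_test p n K \<nu> \<tau> \<gamma>)"
proof -
  have "(\<lambda>x. ennreal (mixture_dens p n K \<nu> \<theta> x)) \<in> borel_measurable (Xn \<mu> n)" if "\<theta> \<in> {0,1}" for \<theta>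
    using mixture_dens_measurable[OF that] by (rule measurable_compose[OF _ measurable_ennreal])
  then have "mlr p n K \<nu> \<in> borel_measurable (Xn \<mu> n)"
    unfolding mlr_eq_mixture_dens[abs_def] by (intro borel_measurable_divide_ennreal) simp_all
  moreover have "(\<lambda>r. if ennreal \<tau> < r then 1 else if r = ennreal \<tau> then \<gamma> else 0 :: real)
      \<in> borel_measurable borel"
    by measurable
  ultimately have "mlr_test p n K \<nu> \<tau> \<gamma> \<in> borel_measurable (Xn \<mu> n)"
    unfolding mlr_test_def[abs_def] by (rule measurable_compose)
  then show ?thesis using assms by (simp add: is_test_def mlr_test_def)
qed

lemma mlr_test_neyman_pearson:
  assumes "0 \<le> \<tau>" "is_test \<mu> n \<phi>" "x \<in> space (Xn \<mu> n)"
  shows "0 \<le> (mlr_test p n K \<nu> \<tau> \<gamma> x - \<phi> x)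
    * (mixture_dens p n K \<nu> 1 x - \<tau> * mixture_dens p n K \<nu> 0 x)"
  unfolding mlr_test_def mlr_eq_mixture_dens
  using assms mixture_dens_nonneg[OF _ assms(3), of 0] mixture_dens_nonneg[OF _ assms(3), of 1]
  by (intro neyman_pearson_pointwise) (simp_all add: is_test_def)

end

theorem lemma1:
  fixes \<mu> :: "'a::linorder measure"
    and p :: "nat \<Rightarrow> nat \<Rightarrow> 'a \<Rightarrow> real"
    and n K :: nat and \<nu> :: "nat \<Rightarrow> real" and \<tau> \<gamma> :: real
    and \<phi> :: "(nat \<Rightarrow> 'a) \<Rightarrow> real"
  assumes "n \<ge> 1"
    and "sigma_finite_measure \<mu>"
    and "\<And>\<theta> k. \<theta> \<in> {0,1} \<Longrightarrow> k \<in> {1..K} \<Longrightarrow>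
           p \<theta> k \<in> borel_measurable \<mu> \<and> (\<forall>x\<in>space \<mu>. 0 \<le> p \<theta> k x) \<and> prob_space (Pk \<mu> p \<theta> k)"
    and "labelings n K \<nu> \<noteq> {}"
    and "\<tau> \<ge> 0" and "0 \<le> \<gamma>" and "\<gamma> \<le> 1"
    and "symmetric_test \<mu> n \<phi>"
    and "PF \<mu> p n K \<nu> \<phi> \<le> PF \<mu> p n K \<nu> (mlr_test p n K \<nu> \<tau> \<gamma>)"
  shows "PM \<mu> p n K \<nu> \<phi> \<ge> PM \<mu> p n K \<nu> (mlr_test p n K \<nu> \<tau> \<gamma>)"
proof -
  interpret anonymous_testing \<mu> p n K \<nu>
    by (rule anonymous_testing.intro) (use assms(2,3) in blast)+
  obtain \<sigma> where \<sigma>: "\<sigma> \<in> labelings n K \<nu>" using assms(4) by blast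
  define \<psi> where "\<psi> = mlr_test p n K \<nu> \<tau> \<gamma>"
  let ?F = "mixture_dens p n K \<nu>"
  have \<theta>: "(0::nat) \<in> {0,1}" "(1::nat) \<in> {0,1}" by simp_all
  have \<phi>: "is_test \<mu> n \<phi>" "perm_invariant n (space (Xn \<mu> n)) \<phi>"
    using assms(8) unfolding symmetric_test_def
    by (rule conjunct1) (rule perm_invariant_symmetric_test[OF assms(8)])
  have \<psi>: "is_test \<mu> n \<psi>" "perm_invariant n (space (Xn \<mu> n)) \<psi>"
    unfolding \<psi>_def using assms(6,7) by (rule is_test_mlr_test) (rule perm_invariant_mlr_test)
  have "integral\<^sup>L (Pprod \<mu> p n 0 \<sigma>) \<phi> \<le> integral\<^sup>L (Pprod \<mu> p n 0 \<sigma>) \<psi>"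
    using assms(9) PF_eq_integral[OF \<sigma> \<phi>] PF_eq_integral[OF \<sigma> \<psi>] by (simp add: \<psi>_def)
  then have size: "(\<integral>x. ?F 0 x * \<phi> x \<partial>Xn \<mu> n) \<le> (\<integral>x. ?F 0 x * \<psi> x \<partial>Xn \<mu> n)"
    using integral_Pprod_le_iff_mixture[OF \<theta>(1) \<sigma> \<phi> \<psi>] by simp
  have pointwise: "0 \<le> (\<psi> x - \<phi> x) * (?F 1 x - \<tau> * ?F 0 x)" if "x \<in> space (Xn \<mu> n)" for x
    unfolding \<psi>_def using assms(5) \<phi>(1) that by (rule mlr_test_neyman_pearson)
  from pointwise assms(5) size
  have "(\<integral>x. ?F 1 x * \<phi> x \<partial>Xn \<mu> n) \<le> (\<integral>x. ?F 1 x * \<psi> x \<partial>Xn \<mu> n)"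
    by (rule neyman_pearson_integral[OF integrable_mixture_dens[OF \<theta>(1) \<phi>(1)]
          integrable_mixture_dens[OF \<theta>(1) \<psi>(1)] integrable_mixture_dens[OF \<theta>(2) \<phi>(1)]
          integrable_mixture_dens[OF \<theta>(2) \<psi>(1)]])
  then have "integral\<^sup>L (Pprod \<mu> p n 1 \<sigma>) \<phi> \<le> integral\<^sup>L (Pprod \<mu> p n 1 \<sigma>) \<psi>"
    using integral_Pprod_le_iff_mixture[OF \<theta>(2) \<sigma> \<phi> \<psi>] by simp
  then show ?thesis
    using PM_eq_integral[OF \<sigma> \<phi>] PM_eq_integral[OF \<sigma> \<psi>] by (simp add: \<psi>_def)
qed

end
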